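(* Decompose the relative BRST operator as $\hat Q=\eta_0\,\mathcal X+\hat d$, where $\mathcal X=\beta_0+\sum_{n\neq0} n\,c_n\zeta_{-n}$ and $\hat d$ contains no $\eta_0$ (nor $\zeta_0$). Let $\mathcal P=\gamma_0$, so $[\mathcal X,\mathcal P]=1$. Define the tilded oscillators $\tilde b_n=b_n+n\zeta_n\gamma_0$ and $\tilde\eta_n=\eta_n+n c_n\gamma_0$ ($n\neq0$). Then the oscillators $\tilde b_n, c_n,\zeta_n,\tilde\eta_n,\beta_n,\gamma_n$ ($n\ne0$) satisfy the same (anti)commutation relations as the untilded ones and all commute with $\mathcal X$ and $\mathcal P$, and $\hat d$ commutes with both $\mathcal X$ and $\mathcal P$; i.e. when written in terms of the tilded oscillators (together with $x_n,\varphi_n$, $n\ne 0$, and the momenta), $\hat d$ is independent of $\mathcal X$ and $\mathcal P$.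
   Context: Same Fock space and BRST operator as follows. Fields/modes: $x_n$, $\varphi_n$ with $[x_m,x_n]=[\varphi_m,\varphi_n]=m\delta_{m+n,0}$; fermionic $b_n,c_n$ with $\{b_m,c_n\}=\delta_{m+n,0}$; fermionic $\zeta_n,\eta_n$ with $\{\zeta_m,\eta_n\}=\delta_{m+n,0}$; bosonic $\beta_n,\gamma_n$ with $[\gamma_m,\beta_n]=\delta_{m+n,0}$. $Q_B=\sum_m :c_{-m}(L^{matt}_m+L^{grav}_m+\tfrac12L^{bc}_m+L^{\zeta\eta}_m)+\eta_{-m}\beta_m:$ with $L^{matt}_n=\tfrac12\sum_m:x_mx_{n-m}:$, $L^{grav}_n=\sum_m:(-m\beta_m\gamma_{n-m}+\tfrac12\varphi_m\varphi_{n-m}):+\sqrt2 i(n+1)\varphi_n$, $L^{bc}_n=\sum_m(2n-m):b_mc_{n-m}:$, $L^{\zeta\eta}_n=-\sum_m m:\zeta_m\eta_{n-m}:$. One writes $Q_B=c_0L_0-b_0\sum_{n\ne0}n c_{-n}c_n+\hat Q$ with $\hat Q$ free of $b_0,c_0$. Explicitly $\hat d=\sum_{n\ne0}:c_{-n}(L^{matt}_n+L^{grav}_n+L'^{\zeta\eta}_n):+\sum_{n\ne0}\eta_{-n}\beta_n-\tfrac12\sum_{m,n\ne0,\,m+n\ne0}(m-n):c_{-m}c_{-n}b_{n+m}:$, where $L'^{\zeta\eta}_n$ is $L^{\zeta\eta}_n$ with the term containing $\eta_0$ removed. *)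

theory Defs
  imports Complex_Main "HOL-Library.Groups_Big_Fun"
begin

datatype mode = MX | MPhi | MB | MC | MZeta | MEta | MBeta | MGamma

definition fermionic :: "mode \<Rightarrow> bool" where
  "fermionic k \<longleftrightarrow> k \<in> {MB, MC, MZeta, MEta}"

definition kd :: "int \<Rightarrow> int \<Rightarrow> complex" where
  "kd m n = (if m + n = 0 then 1 else 0)"

text \<open>The value of the graded bracket [a_k(m), a_l(n)} (a multiple of the identity):
  [x_m,x_n] = [phi_m,phi_n] = m delta, {b_m,c_n} = {zeta_m,eta_n} = delta,
  [gamma_m,beta_n] = delta, and the symmetric partners; all others vanish.\<close>
fun brk :: "mode \<Rightarrow> int \<Rightarrow> mode \<Rightarrow> int \<Rightarrow> complex" where
  "brk MX m MX n = of_int m * kd m n"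
| "brk MPhi m MPhi n = of_int m * kd m n"
| "brk MB m MC n = kd m n"
| "brk MC m MB n = kd m n"
| "brk MZeta m MEta n = kd m n"
| "brk MEta m MZeta n = kd m n"
| "brk MGamma m MBeta n = kd m n"
| "brk MBeta m MGamma n = - kd m n"
| "brk _ _ _ _ = 0"

definition comm :: "('v::ab_group_add \<Rightarrow> 'v) \<Rightarrow> ('v \<Rightarrow> 'v) \<Rightarrow> 'v \<Rightarrow> 'v" where
  "comm A B = (\<lambda>v. A (B v) - B (A v))"

definition acomm :: "('v::ab_group_add \<Rightarrow> 'v) \<Rightarrow> ('v \<Rightarrow> 'v) \<Rightarrow> 'v \<Rightarrow> 'v" where
  "acomm A B = (\<lambda>v. A (B v) + B (A v))"

definition gbr :: "mode \<Rightarrow> mode \<Rightarrow> ('v::ab_group_add \<Rightarrow> 'v) \<Rightarrow> ('v \<Rightarrow> 'v) \<Rightarrow> 'v \<Rightarrow> 'v" where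
  "gbr k l A B = (if fermionic k \<and> fermionic l then acomm A B else comm A B)"

text \<open>A Fock-type representation of the oscillator algebra on a complex vector space
  (scalar multiplication sc): all modes are linear operators, satisfy the graded
  canonical (anti)commutation relations (different fermion systems anticommute,
  bosons commute with everything else), and every state is annihilated by all
  sufficiently high positive modes (so the normal-ordered infinite sums below are finite
  on every state).\<close>
definition osc_rep :: "(complex \<Rightarrow> 'v::ab_group_add \<Rightarrow> 'v) \<Rightarrow> (mode \<Rightarrow> int \<Rightarrow> 'v \<Rightarrow> 'v) \<Rightarrow> bool" where
  "osc_rep sc a \<longleftrightarrow>
     vector_space sc \<and>
     (\<forall>k n. Vector_Spaces.linear sc sc (a k n)) \<and>
     (\<forall>k l m n. gbr k l (a k m) (a l n) = (\<lambda>v. sc (brk k m l n) v)) \<and>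
     (\<forall>v. \<exists>N. \<forall>k n. n > N \<longrightarrow> a k n v = 0)"

definition tld :: "(complex \<Rightarrow> 'v::ab_group_add \<Rightarrow> 'v) \<Rightarrow> (mode \<Rightarrow> int \<Rightarrow> 'v \<Rightarrow> 'v) \<Rightarrow> mode \<Rightarrow> int \<Rightarrow> 'v \<Rightarrow> 'v" where
  "tld sc a k n =
     (if k = MB then (\<lambda>v. a MB n v + sc (of_int n) (a MZeta n (a MGamma 0 v)))
      else if k = MEta then (\<lambda>v. a MEta n v + sc (of_int n) (a MC n (a MGamma 0 v)))
      else a k n)"

definition opX :: "(complex \<Rightarrow> 'v::ab_group_add \<Rightarrow> 'v) \<Rightarrow> (mode \<Rightarrow> int \<Rightarrow> 'v \<Rightarrow> 'v) \<Rightarrow> 'v \<Rightarrow> 'v" where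
  "opX sc a v = a MBeta 0 v +
     Sum_any (\<lambda>n::int. if n = 0 then 0 else sc (of_int n) (a MC n (a MZeta (-n) v)))"

definition opP :: "(mode \<Rightarrow> int \<Rightarrow> 'v \<Rightarrow> 'v) \<Rightarrow> 'v \<Rightarrow> 'v" where
  "opP a = a MGamma 0"

text \<open>For n /= 0 all factors in each
  normal-ordered monomial mutually (anti)commute, so each normal-ordered monomial equals
  the plain product written below.
  Pieces: sum_{n/=0} c_{-n} L^matt_n; sum_{n/=0} c_{-n} L^grav_n (quadratic part and
  the linear term sqrt2 i (n+1) phi_n); sum_{n/=0} c_{-n} L'^{zeta eta}_n (m = n term,
  containing eta_0, removed); sum_{n/=0} eta_{-n} beta_n; and the cubic ghost term.\<close>
definition dhat :: "(complex \<Rightarrow> 'v::ab_group_add \<Rightarrow> 'v) \<Rightarrow> (mode \<Rightarrow> int \<Rightarrow> 'v \<Rightarrow> 'v) \<Rightarrow> 'v \<Rightarrow> 'v" where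
  "dhat sc a v =
       Sum_any (\<lambda>(n::int, m::int). if n = 0 then 0 else
          sc (1/2) (a MC (-n) (a MX m (a MX (n - m) v))))
     + Sum_any (\<lambda>(n::int, m::int). if n = 0 then 0 else
          sc (- of_int m) (a MC (-n) (a MBeta m (a MGamma (n - m) v)))
          + sc (1/2) (a MC (-n) (a MPhi m (a MPhi (n - m) v))))
     + Sum_any (\<lambda>n::int. if n = 0 then 0 else
          sc (complex_of_real (sqrt 2) * \<i> * of_int (n + 1)) (a MC (-n) (a MPhi n v)))
     + Sum_any (\<lambda>(n::int, m::int). if n = 0 \<or> m = n then 0 else
          sc (- of_int m) (a MC (-n) (a MZeta m (a MEta (n - m) v))))
     + Sum_any (\<lambda>n::int. if n = 0 then 0 else a MEta (-n) (a MBeta n v))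
     + Sum_any (\<lambda>(m::int, n::int). if m = 0 \<or> n = 0 \<or> m + n = 0 then 0 else
          sc (- (1/2) * of_int (m - n)) (a MC (-m) (a MC (-n) (a MB (n + m) v))))"

end

theory Submission
  imports Defs
begin

(* Every state is annihilated by all sufficiently high modes, so the normal-ordered sums defining
   X = beta_0 + sum n c_n zeta_{-n} and d^ are finite on each state and all brackets can be
   computed monomial by monomial from the canonical relations.  In [d^, X] the matter and linear
   Liouville terms commute with X; the beta-gamma part of L^grav and the term eta_{-n} beta_n give
   opposite multiples of sum n c_{-n} beta_n; the zeta-eta and cubic ghost terms combine into
   sum_{A,B} (A + B)^2/2 c_{-A} c_{-B} zeta_{A+B}, which vanishes because the coefficient is
   symmetric in A, B while c_{-A} c_{-B} is antisymmetric.  P = gamma_0 fails to commute only with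
   beta_0, which d^ does not contain.  Finally, the shifts n zeta_n gamma_0 and n c_n gamma_0 of the
   tilded oscillators are exactly what cancels the brackets of b_n and eta_n with X. *)

section \<open>Sums of finitely supported families\<close>


lemma Sum_any_negf: "Sum_any (\<lambda>i. - f i) = - Sum_any (f :: 'i \<Rightarrow> 'b::ab_group_add)"
proof (cases "finite {i. f i \<noteq> 0}")
  case True
  then show ?thesis by (simp add: Sum_any.expand_set sum_negf)
qed simp

lemma Sum_any_subtractf:
  assumes "finite {i. f i \<noteq> 0}" and "finite {i. g i \<noteq> 0}"
  shows "Sum_any (\<lambda>i. f i - g i) = Sum_any f - Sum_any (g :: 'i \<Rightarrow> 'b::ab_group_add)"
  using Sum_any.distrib[of f "\<lambda>i. - g i"] assms by (simp add: Sum_any_negf)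

lemma (in additive) Sum_any:
  assumes "finite {i. g i \<noteq> 0}"
  shows "f (Sum_any g) = Sum_any (\<lambda>i. f (g i))"
proof -
  have "f (Sum_any g) = (\<Sum>i\<in>{i. g i \<noteq> 0}. f (g i))"
    by (simp add: Sum_any.expand_set sum)
  also have "\<dots> = Sum_any (\<lambda>i. f (g i))"
    by (rule Sum_any.expand_superset[symmetric]) (use assms in \<open>auto simp: zero\<close>)
  finally show ?thesis .
qed

lemma Sum_any_diagonal:
  "Sum_any (\<lambda>(n, m). if m = n then g n else 0) = Sum_any (g :: 'i \<Rightarrow> 'b::comm_monoid_add)"
proof -
  let ?h = "\<lambda>(n, m). if m = n then g n else 0"
  have supp: "{p. ?h p \<noteq> 0} = (\<lambda>n. (n, n)) ` {n. g n \<noteq> 0}"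
    by (auto simp: image_iff split: if_splits)
  have inj: "inj (\<lambda>n. (n, n))"
    by (auto intro: injI)
  show ?thesis
  proof (cases "finite {n. g n \<noteq> 0}")
    case True
    have "Sum_any ?h = sum ?h ((\<lambda>n. (n, n)) ` {n. g n \<noteq> 0})"
      by (simp only: Sum_any.expand_set supp)
    also have "\<dots> = sum g {n. g n \<noteq> 0}"
      by (subst sum.reindex) (auto intro: inj_on_subset[OF inj])
    finally show ?thesis
      by (simp only: Sum_any.expand_set[of g])
  next
    case False
    then have "\<not> finite {p. ?h p \<noteq> 0}"
      unfolding supp by (simp add: finite_image_iff inj_on_def)
    with False show ?thesis
      by simp
  qed
qed

lemma Sum_any_swap_antisymmetric:
  assumes "\<And>x y. f (y, x) = - f (x, y)"
  shows "Sum_any f = - Sum_any (f :: 'i \<times> 'i \<Rightarrow> 'b::ab_group_add)"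
proof -
  have "f \<circ> prod.swap = (\<lambda>p. - f p)"
  proof
    fix p :: "'i \<times> 'i"
    obtain x y where "p = (x, y)"
      by (cases p)
    then show "(f \<circ> prod.swap) p = - f p"
      using assms[of y x] by simp
  qed
  then have "Sum_any f = Sum_any (\<lambda>p. - f p)"
    by (rule Sum_any.reindex_cong[OF bij_swap])
  then show ?thesis
    by (simp add: Sum_any_negf)
qed

lemma comm_Sum_any_left:
  assumes "additive B" and "\<And>w. finite {i. A i w \<noteq> 0}"
  shows "comm (\<lambda>v. Sum_any (\<lambda>i. A i v)) B v = Sum_any (\<lambda>i. comm (A i) B v)"
proof -
  interpret additive B by fact
  have "finite {i. B (A i v) \<noteq> 0}"
    by (rule finite_subset[OF _ assms(2)[of v]]) (auto simp: zero)
  then show ?thesis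
    unfolding comm_def by (simp add: Sum_any assms(2) Sum_any_subtractf)
qed

lemma comm_Sum_any_right:
  assumes "additive A" and "\<And>w. finite {i. B i w \<noteq> 0}"
  shows "comm A (\<lambda>v. Sum_any (\<lambda>i. B i v)) v = Sum_any (\<lambda>i. comm A (B i) v)"
proof -
  interpret additive A by fact
  have "finite {i. A (B i v) \<noteq> 0}"
    by (rule finite_subset[OF _ assms(2)[of v]]) (auto simp: zero)
  then show ?thesis
    unfolding comm_def by (simp add: Sum_any assms(2) Sum_any_subtractf)
qed

section \<open>Representations of the oscillator algebra\<close>

lemma kd_eq_if: "kd m n = (if n = - m then 1 else 0)"
  by (auto simp: kd_def)

(* Exchanging a pair of modes only when it is out of this order makes the canonical relations a
   terminating rewrite system (normal ordering). *)
fun mode_rank :: "mode \<Rightarrow> nat" where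
  "mode_rank MB = 0" | "mode_rank MC = 1" | "mode_rank MZeta = 2" | "mode_rank MEta = 3"
| "mode_rank MX = 4" | "mode_rank MPhi = 5" | "mode_rank MBeta = 6" | "mode_rank MGamma = 7"

locale oscillator_rep =
  fixes sc :: "complex \<Rightarrow> 'v::ab_group_add \<Rightarrow> 'v"
    and a :: "mode \<Rightarrow> int \<Rightarrow> 'v \<Rightarrow> 'v"
  assumes osc_rep: "osc_rep sc a"
begin

sublocale vector_space sc
  using osc_rep by (simp add: osc_rep_def)

declare scale_right_distrib [simp] scale_right_diff_distrib [simp]

lemma mode_linear: "Vector_Spaces.linear sc sc (a k n)"
  using osc_rep by (simp add: osc_rep_def)

lemma mode_add [simp]: "a k n (x + y) = a k n x + a k n y"
  and mode_scale [simp]: "a k n (sc c x) = sc c (a k n x)"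
  using mode_linear by (simp_all add: Vector_Spaces.linear_iff)

sublocale mode: additive "a k n" for k n
  by standard simp

declare mode.zero [simp] mode.minus [simp] mode.diff [simp]

lemma mode_brackets: "gbr k l (a k m) (a l n) = (\<lambda>v. sc (brk k m l n) v)"
  using osc_rep by (simp add: osc_rep_def)

lemma mode_exchange:
  "a k m (a l n v) =
     (if fermionic k \<and> fermionic l then - a l n (a k m v) else a l n (a k m v)) + sc (brk k m l n) v"
proof -
  have "gbr k l (a k m) (a l n) v = sc (brk k m l n) v"
    by (simp add: mode_brackets)
  then show ?thesis
    by (auto simp: gbr_def acomm_def comm_def algebra_simps)
qed

lemma mode_exchange_ordered:
  "mode_rank l < mode_rank k \<Longrightarrow> a k m (a l n v) =
     (if fermionic k \<and> fermionic l then - a l n (a k m v) else a l n (a k m v)) + sc (brk k m l n) v"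
  by (rule mode_exchange)

lemma fermion_anticommute: "fermionic k \<Longrightarrow> a k m (a k n v) = - a k n (a k m v)"
  using mode_exchange[of k m k n v] by (cases k) (auto simp: fermionic_def)

lemma boson_commute: "k \<in> {MBeta, MGamma} \<Longrightarrow> a k m (a k n v) = a k n (a k m v)"
  using mode_exchange[of k m k n v] by (auto simp: fermionic_def)

lemma scale_collect: "sc c x + sc d x = sc (c + d) x" "sc c x + (sc d x + y) = sc (c + d) x + y"
  by (simp_all add: scale_left_distrib add.assoc)

(* As m, n are nonzero, beta_m and beta_n commute with gamma_0; the only cross terms that survive
   are those in the bracket of b~_m with eta~_n, and they add up to (m + n) delta_{m+n,0} gamma_0 = 0. *)
lemma tilde_brackets:
  assumes "m \<noteq> 0" and "n \<noteq> 0"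
  shows "gbr k l (tld sc a k m) (tld sc a l n) = (\<lambda>v. sc (brk k m l n) v)"
  using assms
  by (cases k; cases l)
    (simp_all only: tld_def mode.distinct if_True if_False mode_brackets,
     simp_all add: gbr_def acomm_def comm_def fermionic_def fun_eq_iff mode_exchange_ordered kd_eq_if
      mult_ac scale_collect boson_commute[of MGamma 0 n] boson_commute[of MGamma 0 m]
      fermion_anticommute[of MB n m] fermion_anticommute[of MC n m]
      fermion_anticommute[of MZeta n m] fermion_anticommute[of MEta n m])

definition annihilated_above :: "int \<Rightarrow> 'v \<Rightarrow> bool" where
  "annihilated_above N w \<longleftrightarrow> (\<forall>k n. n > N \<longrightarrow> a k n w = 0)"

lemma ex_annihilated_above: "\<exists>N. annihilated_above N w"
  using osc_rep by (simp add: osc_rep_def annihilated_above_def)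

lemma mode_index_bounded: "annihilated_above N w \<Longrightarrow> a k p w \<noteq> 0 \<Longrightarrow> p \<le> N"
  unfolding annihilated_above_def by (meson not_le)

lemma mode_kills_through:
  "brk k p l q = 0 \<Longrightarrow> a k p w = 0 \<Longrightarrow> a k p (a l q w) = 0"
  using mode_exchange[of k p l q w] by simp

lemma monomial2_indices_bounded:
  assumes "annihilated_above N w" and "a k p (a l q w) \<noteq> 0" and "brk k p l q = 0"
  shows "p \<le> N \<and> q \<le> N"
  using assms by (metis mode.zero mode_index_bounded mode_kills_through)

lemma monomial3_indices_bounded:
  assumes N: "annihilated_above N w"
    and nz: "a k1 p1 (a k2 p2 (a k3 p3 w)) \<noteq> 0"
    and "brk k1 p1 k2 p2 = 0" "brk k1 p1 k3 p3 = 0" "brk k2 p2 k3 p3 = 0"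
  shows "p1 \<le> N \<and> p2 \<le> N \<and> p3 \<le> N"
proof -
  have "a k2 p2 (a k3 p3 w) \<noteq> 0"
    using nz by auto
  then have "p2 \<le> N \<and> p3 \<le> N"
    using assms(5) by (rule monomial2_indices_bounded[OF N])
  moreover have "p1 \<le> N"
  proof (rule ccontr)
    assume "\<not> p1 \<le> N"
    then have "a k1 p1 w = 0"
      using N by (simp add: annihilated_above_def)
    then have "a k1 p1 (a k2 p2 (a k3 p3 w)) = 0"
      using assms(3,4) by (simp add: mode_kills_through)
    with nz show False ..
  qed
  ultimately show ?thesis
    by blast
qed

section \<open>The commutator of d^ with X\<close>

(* The summand beta_0 of X is put in the otherwise empty slot k = 0. *)
definition opX_term :: "int \<Rightarrow> 'v \<Rightarrow> 'v" where
  "opX_term k v = (if k = 0 then a MBeta 0 v else sc (of_int k) (a MC k (a MZeta (-k) v)))"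

lemma opX_term_add [simp]: "opX_term k (x + y) = opX_term k x + opX_term k y"
  and opX_term_scale [simp]: "opX_term k (sc c x) = sc c (opX_term k x)"
  by (simp_all add: opX_term_def mult.commute)

sublocale opX_term: additive "opX_term k" for k
  by standard (rule opX_term_add)

declare opX_term.zero [simp] opX_term.minus [simp] opX_term.diff [simp]

lemma finite_opX_term_support: "finite {k. opX_term k w \<noteq> 0}"
proof -
  obtain N where N: "annihilated_above N w"
    using ex_annihilated_above ..
  have "{k. opX_term k w \<noteq> 0} \<subseteq> {-N..N}"
  proof
    fix k
    assume "k \<in> {k. opX_term k w \<noteq> 0}"
    then show "k \<in> {-N..N}"
      using mode_index_bounded[OF N] monomial2_indices_bounded[OF N, of MC k MZeta "-k"]
      by (cases "k = 0") (force simp: opX_term_def)+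
  qed
  then show ?thesis
    by (rule finite_subset) simp
qed

lemma opX_eq_Sum_any: "opX sc a = (\<lambda>v. Sum_any (\<lambda>k. opX_term k v))"
proof
  fix v
  let ?beta = "\<lambda>k::int. if k = 0 then a MBeta 0 v else 0"
  let ?ghost = "\<lambda>k::int. if k = 0 then 0 else sc (of_int k) (a MC k (a MZeta (-k) v))"
  have "finite {k. ?beta k \<noteq> 0}"
    by (rule finite_subset[of _ "{0}"]) auto
  moreover have "finite {k. ?ghost k \<noteq> 0}"
    by (rule finite_subset[OF _ finite_opX_term_support[of v]]) (auto simp: opX_term_def)
  moreover have "opX_term k v = ?beta k + ?ghost k" for k
    by (simp add: opX_term_def)
  ultimately show "opX sc a v = Sum_any (\<lambda>k. opX_term k v)"
    by (simp add: Sum_any.distrib opX_def)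
qed

lemma opX_additive: "additive (opX sc a)"
proof
  fix x y
  show "opX sc a (x + y) = opX sc a x + opX sc a y"
    by (simp add: opX_eq_Sum_any Sum_any.distrib[OF finite_opX_term_support finite_opX_term_support])
qed

lemma mode_opX_term [simp]:
  shows "a MX p (opX_term k w) = opX_term k (a MX p w)"
    and "a MPhi p (opX_term k w) = opX_term k (a MPhi p w)"
    and "a MC p (opX_term k w) = opX_term k (a MC p w)"
    and "a MZeta p (opX_term k w) = opX_term k (a MZeta p w)"
    and "a MBeta p (opX_term k w) = opX_term k (a MBeta p w)"
    and "a MGamma p (opX_term k w) = opX_term k (a MGamma p w) + (if k = 0 \<and> p = 0 then w else 0)"
    and "a MEta p (opX_term k w) =
      opX_term k (a MEta p w) + (if k = p \<and> k \<noteq> 0 then - sc (of_int k) (a MC k w) else 0)"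
    and "a MB p (opX_term k w) =
      opX_term k (a MB p w) + (if k = - p \<and> k \<noteq> 0 then sc (of_int k) (a MZeta (- k) w) else 0)"
proof -
  note simps = opX_term_def fermionic_def kd_def
  show "a MX p (opX_term k w) = opX_term k (a MX p w)"
    by (simp add: simps mode_exchange[of MX])
  show "a MPhi p (opX_term k w) = opX_term k (a MPhi p w)"
    by (simp add: simps mode_exchange[of MPhi])
  show "a MC p (opX_term k w) = opX_term k (a MC p w)"
    by (simp add: simps mode_exchange[of MC p])
  show "a MZeta p (opX_term k w) = opX_term k (a MZeta p w)"
    by (simp add: simps mode_exchange[of MZeta p])
  show "a MBeta p (opX_term k w) = opX_term k (a MBeta p w)"
    by (simp add: simps mode_exchange[of MBeta p _ 0] mode_exchange[of MBeta p MC] mode_exchange[of MBeta p MZeta])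
  show "a MGamma p (opX_term k w) = opX_term k (a MGamma p w) + (if k = 0 \<and> p = 0 then w else 0)"
    by (simp add: simps mode_exchange[of MGamma])
  show "a MEta p (opX_term k w) =
      opX_term k (a MEta p w) + (if k = p \<and> k \<noteq> 0 then - sc (of_int k) (a MC k w) else 0)"
    by (simp add: simps mode_exchange[of MEta])
  show "a MB p (opX_term k w) =
      opX_term k (a MB p w) + (if k = - p \<and> k \<noteq> 0 then sc (of_int k) (a MZeta (- k) w) else 0)"
    by (simp add: simps mode_exchange[of MB])
qed

definition matter_term :: "int \<times> int \<Rightarrow> 'v \<Rightarrow> 'v" where
  "matter_term i v = (case i of (n, m) \<Rightarrow> if n = 0 then 0 else
     sc (1/2) (a MC (-n) (a MX m (a MX (n - m) v))))"

definition grav_quadratic_term :: "int \<times> int \<Rightarrow> 'v \<Rightarrow> 'v" where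
  "grav_quadratic_term i v = (case i of (n, m) \<Rightarrow> if n = 0 then 0 else
     sc (- of_int m) (a MC (-n) (a MBeta m (a MGamma (n - m) v)))
     + sc (1/2) (a MC (-n) (a MPhi m (a MPhi (n - m) v))))"

definition grav_linear_term :: "int \<Rightarrow> 'v \<Rightarrow> 'v" where
  "grav_linear_term n v = (if n = 0 then 0 else
     sc (complex_of_real (sqrt 2) * \<i> * of_int (n + 1)) (a MC (-n) (a MPhi n v)))"

definition zeta_eta_term :: "int \<times> int \<Rightarrow> 'v \<Rightarrow> 'v" where
  "zeta_eta_term i v = (case i of (n, m) \<Rightarrow> if n = 0 \<or> m = n then 0 else
     sc (- of_int m) (a MC (-n) (a MZeta m (a MEta (n - m) v))))"

definition eta_beta_term :: "int \<Rightarrow> 'v \<Rightarrow> 'v" where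
  "eta_beta_term n v = (if n = 0 then 0 else a MEta (-n) (a MBeta n v))"

definition ghost_cubic_term :: "int \<times> int \<Rightarrow> 'v \<Rightarrow> 'v" where
  "ghost_cubic_term i v = (case i of (m, n) \<Rightarrow> if m = 0 \<or> n = 0 \<or> m + n = 0 then 0 else
     sc (- (1/2) * of_int (m - n)) (a MC (-m) (a MC (-n) (a MB (n + m) v))))"

lemma dhat_eq_Sum_any_terms:
  "dhat sc a v = Sum_any (\<lambda>i. matter_term i v) + Sum_any (\<lambda>i. grav_quadratic_term i v)
     + Sum_any (\<lambda>n. grav_linear_term n v) + Sum_any (\<lambda>i. zeta_eta_term i v)
     + Sum_any (\<lambda>n. eta_beta_term n v) + Sum_any (\<lambda>i. ghost_cubic_term i v)"
  by (simp add: dhat_def matter_term_def grav_quadratic_term_def grav_linear_term_def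
      zeta_eta_term_def eta_beta_term_def ghost_cubic_term_def)

lemma dhat_terms_additive:
  "additive (matter_term i)" "additive (grav_quadratic_term i)" "additive (grav_linear_term n)"
  "additive (zeta_eta_term i)" "additive (eta_beta_term n)" "additive (ghost_cubic_term i)"
  by (standard; cases i; simp add: matter_term_def grav_quadratic_term_def grav_linear_term_def
      zeta_eta_term_def eta_beta_term_def ghost_cubic_term_def algebra_simps)+

lemma finite_dhat_term_supports:
  "finite {i. matter_term i w \<noteq> 0}" "finite {i. grav_quadratic_term i w \<noteq> 0}"
  "finite {n. grav_linear_term n w \<noteq> 0}" "finite {i. zeta_eta_term i w \<noteq> 0}"
  "finite {n. eta_beta_term n w \<noteq> 0}" "finite {i. ghost_cubic_term i w \<noteq> 0}"
proof -
  obtain N where N: "annihilated_above N w"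
    using ex_annihilated_above ..
  note bound2 = monomial2_indices_bounded[OF N] and bound3 = monomial3_indices_bounded[OF N]
  have bounded_pairs: "finite {(n, m). - n \<le> N \<and> m \<le> N \<and> n - m \<le> N}"
    by (rule finite_subset[of _ "{-N..2*N} \<times> {-2*N..N}"]) auto
  have bounded_ghost_pairs: "finite {(m, n). - m \<le> N \<and> - n \<le> N \<and> n + m \<le> N}"
    by (rule finite_subset[of _ "{-N..2*N} \<times> {-N..2*N}"]) auto
  show "finite {i. matter_term i w \<noteq> 0}"
    by (rule finite_subset[OF _ bounded_pairs])
      (auto simp: matter_term_def kd_def split: if_splits dest!: bound3)
  show "finite {i. grav_quadratic_term i w \<noteq> 0}"
  proof (rule finite_subset[OF _ bounded_pairs], clarify)
    fix n m
    assume "grav_quadratic_term (n, m) w \<noteq> 0"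
    then have "n \<noteq> 0" and "a MC (-n) (a MBeta m (a MGamma (n - m) w)) \<noteq> 0
        \<or> a MC (-n) (a MPhi m (a MPhi (n - m) w)) \<noteq> 0"
      by (auto simp: grav_quadratic_term_def split: if_splits)
    then show "- n \<le> N \<and> m \<le> N \<and> n - m \<le> N"
      by (auto simp: kd_def dest!: bound3)
  qed
  show "finite {n. grav_linear_term n w \<noteq> 0}"
  proof (rule finite_subset[of _ "{-N..N}"], clarify)
    fix n
    assume "grav_linear_term n w \<noteq> 0"
    then have "a MC (-n) (a MPhi n w) \<noteq> 0"
      by (auto simp: grav_linear_term_def split: if_splits)
    then show "n \<in> {-N..N}"
      using bound2[of MC "-n" MPhi n] by simp
  qed simp
  show "finite {i. zeta_eta_term i w \<noteq> 0}"
    by (rule finite_subset[OF _ bounded_pairs])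
      (auto simp: zeta_eta_term_def kd_def split: if_splits dest!: bound3)
  show "finite {n. eta_beta_term n w \<noteq> 0}"
  proof (rule finite_subset[of _ "{-N..N}"], clarify)
    fix n
    assume "eta_beta_term n w \<noteq> 0"
    then have "a MEta (-n) (a MBeta n w) \<noteq> 0"
      by (simp add: eta_beta_term_def split: if_splits)
    then show "n \<in> {-N..N}"
      using bound2[of MEta "-n" MBeta n] by simp
  qed simp
  show "finite {i. ghost_cubic_term i w \<noteq> 0}"
    by (rule finite_subset[OF _ bounded_ghost_pairs])
      (auto simp: ghost_cubic_term_def kd_def split: if_splits dest!: bound3)
qed

lemma comm_Sum_any_opX:
  assumes "\<And>i. additive (T i)" and "\<And>w. finite {i. T i w \<noteq> 0}"
  shows "comm (\<lambda>v. Sum_any (\<lambda>i. T i v)) (opX sc a) v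
    = Sum_any (\<lambda>i. Sum_any (\<lambda>k. comm (T i) (opX_term k) v))"
proof -
  have "comm (\<lambda>v. Sum_any (\<lambda>i. T i v)) (opX sc a) v = Sum_any (\<lambda>i. comm (T i) (opX sc a) v)"
    by (rule comm_Sum_any_left[OF opX_additive assms(2)])
  also have "\<dots> = Sum_any (\<lambda>i. Sum_any (\<lambda>k. comm (T i) (opX_term k) v))"
    unfolding opX_eq_Sum_any by (rule Sum_any.cong) (rule comm_Sum_any_right[OF assms(1) finite_opX_term_support])
  finally show ?thesis .
qed

lemma comm_dhat_terms_opX_term:
  "comm (matter_term i) (opX_term k) v = 0"
  "comm (grav_linear_term n) (opX_term k) v = 0"
  "comm (grav_quadratic_term (n, m)) (opX_term k) v =
     (if k = 0 \<and> m = n \<and> n \<noteq> 0 then sc (- of_int n) (a MC (-n) (a MBeta n v)) else 0)"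
  "comm (eta_beta_term n) (opX_term k) v =
     (if k = - n \<and> n \<noteq> 0 then sc (of_int n) (a MC (-n) (a MBeta n v)) else 0)"
  "comm (zeta_eta_term (n, m)) (opX_term k) v = (if k = n - m \<and> n \<noteq> 0 \<and> m \<noteq> n then
     sc (of_int m * of_int (n - m)) (a MC (-n) (a MZeta m (a MC (n - m) v))) else 0)"
  "comm (ghost_cubic_term (m, n)) (opX_term k) v = (if k = - (n + m) \<and> m \<noteq> 0 \<and> n \<noteq> 0 \<and> m + n \<noteq> 0
     then sc (- (1/2) * of_int (m - n) * of_int (- (n + m))) (a MC (-m) (a MC (-n) (a MZeta (m + n) v)))
     else 0)"
proof -
  show "comm (matter_term i) (opX_term k) v = 0"
    by (cases i) (simp add: comm_def matter_term_def)
  show "comm (grav_linear_term n) (opX_term k) v = 0"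
    by (simp add: comm_def grav_linear_term_def)
qed (auto simp: comm_def grav_quadratic_term_def eta_beta_term_def zeta_eta_term_def ghost_cubic_term_def)

definition c_beta_term :: "'v \<Rightarrow> int \<Rightarrow> 'v" where
  "c_beta_term v n = (if n = 0 then 0 else sc (of_int n) (a MC (-n) (a MBeta n v)))"

lemma comm_grav_quadratic_opX:
  "comm (\<lambda>v. Sum_any (\<lambda>i. grav_quadratic_term i v)) (opX sc a) v = - Sum_any (c_beta_term v)"
proof -
  have "comm (\<lambda>v. Sum_any (\<lambda>i. grav_quadratic_term i v)) (opX sc a) v
      = Sum_any (\<lambda>i. Sum_any (\<lambda>k. comm (grav_quadratic_term i) (opX_term k) v))"
    by (rule comm_Sum_any_opX[OF dhat_terms_additive(2) finite_dhat_term_supports(2)])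
  also have "\<dots> = Sum_any (\<lambda>(n, m). if m = n then - c_beta_term v n else 0)"
    by (rule Sum_any.cong) (auto simp: comm_dhat_terms_opX_term c_beta_term_def)
  also have "\<dots> = - Sum_any (c_beta_term v)"
    by (simp only: Sum_any_diagonal Sum_any_negf)
  finally show ?thesis .
qed

lemma comm_eta_beta_opX:
  "comm (\<lambda>v. Sum_any (\<lambda>n. eta_beta_term n v)) (opX sc a) v = Sum_any (c_beta_term v)"
proof -
  have "comm (\<lambda>v. Sum_any (\<lambda>n. eta_beta_term n v)) (opX sc a) v
      = Sum_any (\<lambda>n. Sum_any (\<lambda>k. comm (eta_beta_term n) (opX_term k) v))"
    by (rule comm_Sum_any_opX[OF dhat_terms_additive(5) finite_dhat_term_supports(5)])
  also have "\<dots> = Sum_any (c_beta_term v)"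
    by (rule Sum_any.cong) (simp add: comm_dhat_terms_opX_term c_beta_term_def)
  finally show ?thesis .
qed

definition c_c_zeta_term :: "(int \<Rightarrow> int \<Rightarrow> complex) \<Rightarrow> 'v \<Rightarrow> int \<times> int \<Rightarrow> 'v" where
  "c_c_zeta_term f v i = (case i of (A, B) \<Rightarrow> if A \<noteq> 0 \<and> B \<noteq> 0 \<and> A + B \<noteq> 0
     then sc (f A B) (a MC (-A) (a MC (-B) (a MZeta (A + B) v))) else 0)"

lemma finite_c_c_zeta_term_support: "finite {i. c_c_zeta_term f v i \<noteq> 0}"
proof -
  obtain N where N: "annihilated_above N v"
    using ex_annihilated_above ..
  have "{i. c_c_zeta_term f v i \<noteq> 0} \<subseteq> {-N..2*N} \<times> {-N..2*N}"
    by (auto simp: c_c_zeta_term_def split: if_splits dest!: monomial3_indices_bounded[OF N])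
  then show ?thesis
    by (rule finite_subset) simp
qed

lemma c_c_zeta_term_add:
  "c_c_zeta_term f v i + c_c_zeta_term g v i = c_c_zeta_term (\<lambda>A B. f A B + g A B) v i"
  by (simp add: c_c_zeta_term_def scale_left_distrib split: prod.split)

lemma c_c_zeta_term_swap:
  assumes "\<And>A B. f B A = f A B"
  shows "c_c_zeta_term f v (B, A) = - c_c_zeta_term f v (A, B)"
  using fermion_anticommute[of MC "-B" "-A"] by (simp add: c_c_zeta_term_def assms add.commute fermionic_def)

lemma self_neg_eq_0:
  fixes x :: 'v
  assumes "x = - x"
  shows "x = 0"
proof -
  have "sc (1/2) (x + x) = 0"
    using assms by (metis add.right_inverse scale_zero_right)
  then show "x = 0"
    by (simp add: scale_collect)
qed

lemma Sum_any_c_c_zeta_term_symmetric: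
  assumes "\<And>A B. f B A = f A B"
  shows "Sum_any (c_c_zeta_term f v) = 0"
  using c_c_zeta_term_swap[OF assms]
  by (intro self_neg_eq_0 Sum_any_swap_antisymmetric)

lemma comm_zeta_eta_opX:
  "comm (\<lambda>v. Sum_any (\<lambda>i. zeta_eta_term i v)) (opX sc a) v
    = Sum_any (c_c_zeta_term (\<lambda>A B. of_int ((A + B) * B)) v)"
proof -
  let ?bracket = "\<lambda>(n, m). if n \<noteq> 0 \<and> m \<noteq> n then
     sc (of_int m * of_int (n - m)) (a MC (-n) (a MZeta m (a MC (n - m) v))) else 0"
  have "comm (\<lambda>v. Sum_any (\<lambda>i. zeta_eta_term i v)) (opX sc a) v
      = Sum_any (\<lambda>i. Sum_any (\<lambda>k. comm (zeta_eta_term i) (opX_term k) v))"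
    by (rule comm_Sum_any_opX[OF dhat_terms_additive(4) finite_dhat_term_supports(4)])
  also have "\<dots> = Sum_any ?bracket"
    by (rule Sum_any.cong) (auto simp: comm_dhat_terms_opX_term)
  also have "\<dots> = Sum_any (c_c_zeta_term (\<lambda>A B. of_int ((A + B) * B)) v)"
  proof (rule Sum_any.reindex_cong[of "\<lambda>(A, B). (A, A + B)"])
    show "bij (\<lambda>(A::int, B::int). (A, A + B))"
      by (rule bij_betw_byWitness[of _ "\<lambda>(n, m). (n, m - n)"]) auto
    have "?bracket (A, A + B) = c_c_zeta_term (\<lambda>A B. of_int ((A + B) * B)) v (A, B)" for A B
      using mode_exchange[of MZeta "A + B" MC "-B" v]
      by (auto simp: c_c_zeta_term_def fermionic_def)
    then show "?bracket \<circ> (\<lambda>(A, B). (A, A + B)) = c_c_zeta_term (\<lambda>A B. of_int ((A + B) * B)) v"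
      by auto
  qed
  finally show ?thesis .
qed

lemma comm_ghost_cubic_opX:
  "comm (\<lambda>v. Sum_any (\<lambda>i. ghost_cubic_term i v)) (opX sc a) v
    = Sum_any (c_c_zeta_term (\<lambda>A B. of_int ((A - B) * (A + B)) / 2) v)"
proof -
  have "comm (\<lambda>v. Sum_any (\<lambda>i. ghost_cubic_term i v)) (opX sc a) v
      = Sum_any (\<lambda>i. Sum_any (\<lambda>k. comm (ghost_cubic_term i) (opX_term k) v))"
    by (rule comm_Sum_any_opX[OF dhat_terms_additive(6) finite_dhat_term_supports(6)])
  also have "\<dots> = Sum_any (c_c_zeta_term (\<lambda>A B. of_int ((A - B) * (A + B)) / 2) v)"
  proof (rule Sum_any.cong)
    fix i :: "int \<times> int"
    obtain m n where i: "i = (m, n)"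
      by (cases i)
    have coefficient:
      "- (1/2) * of_int (m - n) * of_int (- (n + m)) = (of_int ((m - n) * (m + n)) / 2 :: complex)"
      by (simp add: field_simps)
    show "Sum_any (\<lambda>k. comm (ghost_cubic_term i) (opX_term k) v)
        = c_c_zeta_term (\<lambda>A B. of_int ((A - B) * (A + B)) / 2) v i"
      unfolding i comm_dhat_terms_opX_term coefficient by (simp add: c_c_zeta_term_def add.commute)
  qed
  finally show ?thesis .
qed

lemma comm_dhat_opX: "comm (dhat sc a) (opX sc a) = (\<lambda>v. 0)"
proof
  fix v
  interpret X: additive "opX sc a"
    by (rule opX_additive)
  have commuting: "comm (\<lambda>v. Sum_any (\<lambda>i. matter_term i v)) (opX sc a) v = 0"
    "comm (\<lambda>v. Sum_any (\<lambda>n. grav_linear_term n v)) (opX sc a) v = 0"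
    by (simp_all add: comm_Sum_any_opX dhat_terms_additive finite_dhat_term_supports
        comm_dhat_terms_opX_term)
  let ?f = "\<lambda>A B. of_int ((A + B) * B)" and ?g = "\<lambda>A B. of_int ((A - B) * (A + B)) / 2"
  have "comm (dhat sc a) (opX sc a) v =
      comm (\<lambda>v. Sum_any (\<lambda>i. matter_term i v)) (opX sc a) v
    + comm (\<lambda>v. Sum_any (\<lambda>i. grav_quadratic_term i v)) (opX sc a) v
    + comm (\<lambda>v. Sum_any (\<lambda>n. grav_linear_term n v)) (opX sc a) v
    + comm (\<lambda>v. Sum_any (\<lambda>i. zeta_eta_term i v)) (opX sc a) v
    + comm (\<lambda>v. Sum_any (\<lambda>n. eta_beta_term n v)) (opX sc a) v
    + comm (\<lambda>v. Sum_any (\<lambda>i. ghost_cubic_term i v)) (opX sc a) v"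
    by (simp add: comm_def dhat_eq_Sum_any_terms X.add algebra_simps)
  also have "\<dots> = Sum_any (c_c_zeta_term ?f v) + Sum_any (c_c_zeta_term ?g v)"
    by (simp add: commuting comm_grav_quadratic_opX comm_zeta_eta_opX comm_eta_beta_opX
        comm_ghost_cubic_opX)
  also have "\<dots> = Sum_any (c_c_zeta_term (\<lambda>A B. ?f A B + ?g A B) v)"
    by (simp add: Sum_any.distrib[symmetric] finite_c_c_zeta_term_support c_c_zeta_term_add)
  also have "\<dots> = 0"
    by (rule Sum_any_c_c_zeta_term_symmetric) (simp add: field_simps)
  finally show "comm (dhat sc a) (opX sc a) v = 0" .
qed

section \<open>The remaining commutators\<close>

lemma mode_gamma0:
  "k \<noteq> MGamma \<Longrightarrow> a k p (a MGamma 0 w) = a MGamma 0 (a k p w) + (if k = MBeta \<and> p = 0 then - w else 0)"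
  "p \<noteq> 0 \<Longrightarrow> a MGamma p (a MGamma 0 w) = a MGamma 0 (a MGamma p w)"
  using mode_exchange[of k p MGamma 0 w] boson_commute[of MGamma p 0 w]
  by (cases k; simp add: fermionic_def kd_def)+

lemma comm_dhat_terms_gamma0:
  "comm (matter_term i) (a MGamma 0) v = 0"
  "comm (grav_quadratic_term i) (a MGamma 0) v = 0"
  "comm (grav_linear_term n) (a MGamma 0) v = 0"
  "comm (zeta_eta_term i) (a MGamma 0) v = 0"
  "comm (eta_beta_term n) (a MGamma 0) v = 0"
  "comm (ghost_cubic_term i) (a MGamma 0) v = 0"
  by (cases i; cases "fst i = snd i";
      simp add: comm_def mode_gamma0 matter_term_def grav_quadratic_term_def grav_linear_term_def
        zeta_eta_term_def eta_beta_term_def ghost_cubic_term_def split: prod.splits)+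

lemma comm_dhat_opP: "comm (dhat sc a) (opP a) = (\<lambda>v. 0)"
proof
  fix v
  have "comm (dhat sc a) (opP a) v =
      comm (\<lambda>v. Sum_any (\<lambda>i. matter_term i v)) (a MGamma 0) v
    + comm (\<lambda>v. Sum_any (\<lambda>i. grav_quadratic_term i v)) (a MGamma 0) v
    + comm (\<lambda>v. Sum_any (\<lambda>n. grav_linear_term n v)) (a MGamma 0) v
    + comm (\<lambda>v. Sum_any (\<lambda>i. zeta_eta_term i v)) (a MGamma 0) v
    + comm (\<lambda>v. Sum_any (\<lambda>n. eta_beta_term n v)) (a MGamma 0) v
    + comm (\<lambda>v. Sum_any (\<lambda>i. ghost_cubic_term i v)) (a MGamma 0) v"
    by (simp add: comm_def dhat_eq_Sum_any_terms opP_def algebra_simps)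
  also have "\<dots> = 0"
    by (simp add: comm_Sum_any_left[OF mode.additive_axioms] finite_dhat_term_supports
        comm_dhat_terms_gamma0)
  finally show "comm (dhat sc a) (opP a) v = 0" .
qed

lemma tilde_additive: "additive (tld sc a k n)"
  by standard (simp add: tld_def)

lemma comm_tilde_opX:
  assumes "n \<noteq> 0"
  shows "comm (tld sc a k n) (opX sc a) = (\<lambda>v. 0)"
proof
  fix v
  have "comm (tld sc a k n) (opX sc a) v = Sum_any (\<lambda>j. comm (tld sc a k n) (opX_term j) v)"
    unfolding opX_eq_Sum_any by (rule comm_Sum_any_right[OF tilde_additive finite_opX_term_support])
  also have "\<dots> = 0"
  proof (cases "k = MB \<or> k = MEta")
    case True
    then show ?thesis
    proof
      assume k: "k = MB"
      have "comm (tld sc a k n) (opX_term j) v = (if j = -n then sc (- of_int n) (a MZeta n v) else 0)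
          + (if j = 0 then sc (of_int n) (a MZeta n v) else 0)" for j
        using assms unfolding k by (auto simp: comm_def tld_def)
      then show ?thesis
        by (simp add: Sum_any.distrib)
    next
      assume k: "k = MEta"
      have "comm (tld sc a k n) (opX_term j) v = (if j = n then - sc (of_int n) (a MC n v) else 0)
          + (if j = 0 then sc (of_int n) (a MC n v) else 0)" for j
        using assms unfolding k by (auto simp: comm_def tld_def)
      then show ?thesis
        by (simp add: Sum_any.distrib)
    qed
  next
    case False
    then have "comm (tld sc a k n) (opX_term j) v = 0" for j
      using assms by (cases k) (auto simp: comm_def tld_def)
    then show ?thesis
      by simp
  qed
  finally show "comm (tld sc a k n) (opX sc a) v = 0" .
qed

lemma comm_tilde_opP: "n \<noteq> 0 \<Longrightarrow> comm (tld sc a k n) (opP a) = (\<lambda>v. 0)"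
  by (cases k) (simp_all add: fun_eq_iff comm_def tld_def opP_def mode_gamma0)

end

theorem mainTheorem2:
  fixes sc :: "complex \<Rightarrow> 'v::ab_group_add \<Rightarrow> 'v"
    and a :: "mode \<Rightarrow> int \<Rightarrow> 'v \<Rightarrow> 'v"
  assumes "osc_rep sc a"
  shows "(\<forall>k l m n. m \<noteq> 0 \<longrightarrow> n \<noteq> 0 \<longrightarrow>
            gbr k l (tld sc a k m) (tld sc a l n) = (\<lambda>v. sc (brk k m l n) v))
       \<and> (\<forall>k n. n \<noteq> 0 \<longrightarrow> comm (tld sc a k n) (opX sc a) = (\<lambda>v. 0)
                          \<and> comm (tld sc a k n) (opP a) = (\<lambda>v. 0))
       \<and> comm (dhat sc a) (opX sc a) = (\<lambda>v. 0)
       \<and> comm (dhat sc a) (opP a) = (\<lambda>v. 0)"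
proof -
  interpret oscillator_rep sc a
    by (rule oscillator_rep.intro) fact
  show ?thesis
    by (simp add: tilde_brackets comm_tilde_opX comm_tilde_opP comm_dhat_opX comm_dhat_opP)
qed

end
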